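(* Assume the demand is i.i.d. with pmf $P_X$ (so $Q(x'\mid x)=P_X(x')$). Given $a\in\mathcal A$ and $\pi\in\mathcal P_{X,S}$, define $\xi(w)=\sum_{(x,s):s-x=w}\pi(x,s)$ for $w\in\mathcal W$, $b(y\mid w)=\frac{\sum_{(x,s):s-x=w}a(y\mid x,s)\pi(x,s)}{\xi(w)}$, and $\tilde a(y\mid x,s)=b(y\mid s-x)$. Then $b\in\mathcal B$, $\tilde a\in\mathcal A$, and (1) for every $y\in\mathcal Y$, $\varphi(\pi,y,a)=\varphi(\pi,y,\tilde a)$; (2) $I(a;\pi)\ge I(\tilde a;\pi)=I(b;\xi)$. Consequently, in the sequential decision problem there is no loss of optimality in restricting attention to actions of the form $\tilde a(y\mid x,s)=b(y\mid s-x)$ with $b\in\mathcal B$.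
   Context: $\mathcal X=\{0,\dots,m_x\}$, $\mathcal Y=\{0,\dots,m_y\}$, $\mathcal S=\{0,\dots,m_s\}$ with $m_x\le m_y$; $\mathcal W=\{s-x:s\in\mathcal S,x\in\mathcal X\}$; $\mathcal Y_\circ(w)=\{y\in\mathcal Y:w+y\in\mathcal S\}$; $\mathcal P_{X,S}$ the pmfs on $\mathcal X\times\mathcal S$. $\mathcal A$: conditional pmfs $a(y\mid x,s)$ with $a(\mathcal Y_\circ(s-x)\mid x,s)=1$. $\mathcal B$: conditional pmfs $b(y\mid w)$ with $b(\mathcal Y_\circ(w)\mid w)=1$; when $\xi(w)=0$, $b(\cdot\mid w)$ is taken to be an arbitrary pmf on $\mathcal Y_\circ(w)$. $I(a;\pi)$ is the mutual information between $(X,S)\sim\pi$ and $Y\sim a(\cdot\mid X,S)$; $I(b;\xi)$ is the mutual information between $W\sim\xi$ and $Y\sim b(\cdot\mid W)$. The filter is $\varphi(\pi,y,a)(x',s')=\frac{\sum_xQ(x'|x)a(y|x,s'+x-y)\pi(x,s'+x-y)}{\sum_{x,s}a(y|x,s)\pi(x,s)}$, i.e. the conditional pmf of $(X_+,S_+)$ given $Y=y$ when $(X,S)\sim\pi$, $Y\sim a(\cdot\mid X,S)$, $S_+=S+Y-X$, $X_+\sim Q(\cdot\mid X)$. The sequential problem: actions $A_t\in\mathcal A$ chosen from $(Y^{t-1},A^{t-1})$, $Y_t\sim A_t(\cdot\mid X_t,S_t)$, $S_{t+1}=S_t+Y_t-X_t$, cost $\frac1T\mathbb E[\sum_tI(A_t;\Pi_t)]$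 with $\Pi_t$ the belief on $(X_t,S_t)$. *)

theory Defs
  imports Complex_Main
begin

text \<open>Alphabets: {0..m} as sets of integers (so that s - x and s' + x - y make sense).\<close>
definition rng :: "nat \<Rightarrow> int set" where
  "rng m = {0..int m}"

definition Wset :: "nat \<Rightarrow> nat \<Rightarrow> int set" where
  "Wset mx ms = {s - x | s x. s \<in> rng ms \<and> x \<in> rng mx}"

definition Yo :: "nat \<Rightarrow> nat \<Rightarrow> int \<Rightarrow> int set" where
  "Yo my ms w = {y \<in> rng my. w + y \<in> rng ms}"

definition is_pmf_on :: "'u set \<Rightarrow> ('u \<Rightarrow> real) \<Rightarrow> bool" where
  "is_pmf_on U p \<longleftrightarrow> (\<forall>u. 0 \<le> p u) \<and> (\<forall>u. u \<notin> U \<longrightarrow> p u = 0) \<and> sum p U = 1"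

definition is_pmf_XS :: "nat \<Rightarrow> nat \<Rightarrow> (int \<Rightarrow> int \<Rightarrow> real) \<Rightarrow> bool" where
  "is_pmf_XS mx ms \<pi> = is_pmf_on (rng mx \<times> rng ms) (\<lambda>(x,s). \<pi> x s)"

text \<open>Action set A: a y x s = a(y|x,s).\<close>
definition actA :: "nat \<Rightarrow> nat \<Rightarrow> nat \<Rightarrow> (int \<Rightarrow> int \<Rightarrow> int \<Rightarrow> real) \<Rightarrow> bool" where
  "actA mx my ms a \<longleftrightarrow>
     (\<forall>x\<in>rng mx. \<forall>s\<in>rng ms. is_pmf_on (Yo my ms (s - x)) (\<lambda>y. a y x s))"

definition actB :: "nat \<Rightarrow> nat \<Rightarrow> nat \<Rightarrow> (int \<Rightarrow> int \<Rightarrow> real) \<Rightarrow> bool" where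
  "actB mx my ms b \<longleftrightarrow> (\<forall>w\<in>Wset mx ms. is_pmf_on (Yo my ms w) (\<lambda>y. b y w))"

definition xi :: "nat \<Rightarrow> nat \<Rightarrow> (int \<Rightarrow> int \<Rightarrow> real) \<Rightarrow> int \<Rightarrow> real" where
  "xi mx ms \<pi> w = (\<Sum>x\<in>rng mx. \<Sum>s\<in>rng ms. if s - x = w then \<pi> x s else 0)"

definition mutual_info :: "'u set \<Rightarrow> 'v set \<Rightarrow> ('u \<Rightarrow> 'v \<Rightarrow> real) \<Rightarrow> real" where
  "mutual_info U V J =
     (\<Sum>u\<in>U. \<Sum>v\<in>V. if J u v = 0 then 0
        else J u v * ln (J u v / ((\<Sum>v'\<in>V. J u v') * (\<Sum>u'\<in>U. J u' v))))"

definition MI_A :: "nat \<Rightarrow> nat \<Rightarrow> nat \<Rightarrow> (int \<Rightarrow> int \<Rightarrow> int \<Rightarrow> real) \<Rightarrow> (int \<Rightarrow> int \<Rightarrow> real) \<Rightarrow> real" where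
  "MI_A mx my ms a \<pi> = mutual_info (rng mx \<times> rng ms) (rng my) (\<lambda>(x,s) y. \<pi> x s * a y x s)"

definition MI_B :: "nat \<Rightarrow> nat \<Rightarrow> nat \<Rightarrow> (int \<Rightarrow> int \<Rightarrow> real) \<Rightarrow> (int \<Rightarrow> real) \<Rightarrow> real" where
  "MI_B mx my ms b \<xi> = mutual_info (Wset mx ms) (rng my) (\<lambda>w y. \<xi> w * b y w)"

definition filt :: "nat \<Rightarrow> nat \<Rightarrow> (int \<Rightarrow> int \<Rightarrow> real) \<Rightarrow> (int \<Rightarrow> int \<Rightarrow> real) \<Rightarrow> int
     \<Rightarrow> (int \<Rightarrow> int \<Rightarrow> int \<Rightarrow> real) \<Rightarrow> (int \<Rightarrow> int \<Rightarrow> real)" where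
  "filt mx ms Q \<pi> y a = (\<lambda>x' s'.
     (\<Sum>x\<in>rng mx. Q x' x * a y x (s' + x - y) * \<pi> x (s' + x - y)) /
     (\<Sum>x\<in>rng mx. \<Sum>s\<in>rng ms. a y x s * \<pi> x s))"

text \<open>Expected accumulated cost of a (deterministic, history-dependent) policy sigma over
  n remaining steps, from observation history h and current belief pi:
  the action at history h is sigma h, Y is drawn with probability sum_{x,s} a(y|x,s) pi(x,s),
  and the belief is updated by the filter.\<close>
fun seq_cost :: "nat \<Rightarrow> nat \<Rightarrow> nat \<Rightarrow> (int \<Rightarrow> int \<Rightarrow> real) \<Rightarrow>
     (int list \<Rightarrow> (int \<Rightarrow> int \<Rightarrow> int \<Rightarrow> real)) \<Rightarrow> nat \<Rightarrow> int list \<Rightarrow> (int \<Rightarrow> int \<Rightarrow> real) \<Rightarrow> real" where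
  "seq_cost mx my ms Q \<sigma> 0 h \<pi> = 0"
| "seq_cost mx my ms Q \<sigma> (Suc n) h \<pi> =
     MI_A mx my ms (\<sigma> h) \<pi> +
     (\<Sum>y\<in>rng my. (\<Sum>x\<in>rng mx. \<Sum>s\<in>rng ms. \<sigma> h y x s * \<pi> x s) *
        seq_cost mx my ms Q \<sigma> n (h @ [y]) (filt mx ms Q \<pi> y (\<sigma> h)))"

definition avg_cost :: "nat \<Rightarrow> nat \<Rightarrow> nat \<Rightarrow> (int \<Rightarrow> int \<Rightarrow> real) \<Rightarrow>
     (int list \<Rightarrow> (int \<Rightarrow> int \<Rightarrow> int \<Rightarrow> real)) \<Rightarrow> nat \<Rightarrow> (int \<Rightarrow> int \<Rightarrow> real) \<Rightarrow> real" where
  "avg_cost mx my ms Q \<sigma> T \<pi>0 = (1 / real T) * seq_cost mx my ms Q \<sigma> T [] \<pi>0"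

end

theory Submission
  imports Defs
begin

text \<open>With i.i.d. demand the next belief depends on the current one only through the joint
  law of \<open>(W, Y)\<close>, \<open>W = S - X\<close>: the filter numerator at \<open>(x', s')\<close> is \<open>P\<^sub>X(x')\<close> times the
  mass of \<open>{W = s' - y, Y = y}\<close>. The channel \<open>b\<close> is the conditional law of \<open>Y\<close> given \<open>W\<close>, so
  \<open>\<tilde>a\<close> induces the same law of \<open>(W, Y)\<close> as \<open>a\<close> and hence the same filter and output
  probabilities. Under \<open>\<tilde>a\<close>, \<open>Y\<close> depends on \<open>(X, S)\<close> only through \<open>W\<close>, which gives
  \<open>I(\<tilde>a;\<pi>) = I(b;\<xi>)\<close>, and \<open>I(b;\<xi>) \<le> I(a;\<pi>)\<close> is data processing for the merging map
  \<open>(x, s) \<mapsto> s - x\<close>, proved fiberwise by the log-sum inequality. Replacing each action of a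
  policy by its merged version along the belief path therefore keeps every belief and
  output probability and lowers every stage cost.\<close>

section \<open>Log-sum inequality and merging of inputs\<close>

definition kl_term :: "real \<Rightarrow> real \<Rightarrow> real" where
  "kl_term p q = (if p = 0 then 0 else p * ln (p / q))"

lemma kl_term_scale: "kl_term (c * p) (c * q) = c * kl_term p q"
  by (cases "c = 0") (auto simp: kl_term_def)

lemma log_sum_inequality:
  fixes \<alpha> \<gamma> :: "'i \<Rightarrow> real"
  assumes "finite I" and \<alpha>_nonneg: "\<And>i. i \<in> I \<Longrightarrow> 0 \<le> \<alpha> i"
    and \<gamma>_pos: "\<And>i. i \<in> I \<Longrightarrow> \<alpha> i > 0 \<Longrightarrow> \<gamma> i > 0" and \<gamma>_nonneg: "\<And>i. i \<in> I \<Longrightarrow> 0 \<le> \<gamma> i"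
  shows "kl_term (sum \<alpha> I) (sum \<gamma> I) \<le> (\<Sum>i\<in>I. kl_term (\<alpha> i) (\<gamma> i))"
proof (cases "sum \<alpha> I = 0")
  case True
  then have "\<forall>i\<in>I. \<alpha> i = 0" using sum_nonneg_eq_0_iff[OF \<open>finite I\<close>] \<alpha>_nonneg by blast
  then show ?thesis using True by (simp add: kl_term_def)
next
  case False
  define A C where "A = sum \<alpha> I" and "C = sum \<gamma> I"
  have "A > 0" using False \<alpha>_nonneg unfolding A_def by (simp add: sum_nonneg order_le_neq_trans)
  obtain j where j: "j \<in> I" "\<alpha> j \<noteq> 0" using False by (meson sum.not_neutral_contains_not_neutral)
  have "0 < \<gamma> j" using j \<alpha>_nonneg \<gamma>_pos by force
  also have "\<gamma> j \<le> C" unfolding C_def using \<open>finite I\<close> j(1) \<gamma>_nonneg by (intro member_le_sum) auto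
  finally have "C > 0" .
  \<comment> \<open>termwise, \<open>ln t \<le> t - 1\<close> with \<open>t = \<gamma> i A / (\<alpha> i C)\<close>\<close>
  have termwise: "\<alpha> i * ln (A / C) - \<gamma> i * (A / C) + \<alpha> i \<le> kl_term (\<alpha> i) (\<gamma> i)" if "i \<in> I" for i
  proof (cases "\<alpha> i = 0")
    case True then show ?thesis using \<gamma>_nonneg that \<open>A > 0\<close> \<open>C > 0\<close> by (simp add: kl_term_def)
  next
    case False
    then have "\<alpha> i > 0" "\<gamma> i > 0" using \<alpha>_nonneg \<gamma>_pos that by force+
    define t where "t = \<gamma> i * A / (\<alpha> i * C)"
    have "t > 0" unfolding t_def using \<open>\<alpha> i > 0\<close> \<open>\<gamma> i > 0\<close> \<open>A > 0\<close> \<open>C > 0\<close> by simp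
    have "ln (\<alpha> i / \<gamma> i) = ln (A / C) - ln t"
      unfolding t_def using \<open>\<alpha> i > 0\<close> \<open>\<gamma> i > 0\<close> \<open>A > 0\<close> \<open>C > 0\<close> by (simp add: ln_div ln_mult)
    then have "\<alpha> i * ln (\<alpha> i / \<gamma> i) = \<alpha> i * ln (A / C) - \<alpha> i * ln t"
      by (simp add: right_diff_distrib)
    moreover have "\<alpha> i * ln t \<le> \<alpha> i * (t - 1)"
      using ln_le_minus_one[OF \<open>t > 0\<close>] \<open>\<alpha> i > 0\<close> by (simp add: mult_left_mono)
    moreover have "\<alpha> i * (t - 1) = \<gamma> i * (A / C) - \<alpha> i"
      unfolding t_def using \<open>\<alpha> i > 0\<close> by (simp add: field_simps)
    ultimately show ?thesis using False unfolding kl_term_def by simp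
  qed
  have "A * ln (A / C) = (\<Sum>i\<in>I. \<alpha> i * ln (A / C) - \<gamma> i * (A / C) + \<alpha> i)"
    using \<open>C > 0\<close> unfolding A_def C_def
    by (simp add: sum.distrib sum_subtractf sum_distrib_right[symmetric] sum_divide_distrib[symmetric])
  also have "\<dots> \<le> (\<Sum>i\<in>I. kl_term (\<alpha> i) (\<gamma> i))" by (rule sum_mono) (rule termwise)
  finally show ?thesis using False unfolding A_def C_def kl_term_def by simp
qed

lemma mutual_info_kl_term:
  "mutual_info U V J = (\<Sum>u\<in>U. \<Sum>v\<in>V. kl_term (J u v) ((\<Sum>v'\<in>V. J u v') * (\<Sum>u'\<in>U. J u' v)))"
  unfolding mutual_info_def kl_term_def ..

definition fiber_sum :: "('u \<Rightarrow> 'w) \<Rightarrow> 'u set \<Rightarrow> ('u \<Rightarrow> real) \<Rightarrow> 'w \<Rightarrow> real" where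
  "fiber_sum g U f w = sum f {u. u \<in> U \<and> g u = w}"

lemma sum_fiber_sum:
  "finite U \<Longrightarrow> finite W \<Longrightarrow> g ` U \<subseteq> W \<Longrightarrow> (\<Sum>w\<in>W. fiber_sum g U f w) = sum f U"
  unfolding fiber_sum_def by (rule sum.group)

lemma fiber_sum_mult_right: "fiber_sum g U (\<lambda>u. f u * c) w = fiber_sum g U f w * c"
  unfolding fiber_sum_def by (simp add: sum_distrib_right)

lemma fiber_sum_mult_comp: "fiber_sum g U (\<lambda>u. f u * h (g u)) w = fiber_sum g U f w * h w"
  unfolding fiber_sum_def by (simp add: sum_distrib_right)

lemma mutual_info_fiber_sum_eq:
  fixes p :: "'u \<Rightarrow> real" and K :: "'w \<Rightarrow> 'v \<Rightarrow> real"
  assumes "finite U" "finite W" "g ` U \<subseteq> W"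
  shows "mutual_info U V (\<lambda>u v. p u * K (g u) v) = mutual_info W V (\<lambda>w v. fiber_sum g U p w * K w v)"
proof -
  define k c where "k w = (\<Sum>v\<in>V. K w v)" and "c v = (\<Sum>u\<in>U. p u * K (g u) v)" for w v
  define F where "F w v = kl_term (K w v) (k w * c v)" for w v
  have col: "(\<Sum>w\<in>W. fiber_sum g U p w * K w v) = c v" for v
    using sum_fiber_sum[OF assms, of "\<lambda>u. p u * K (g u) v"]
    unfolding c_def by (simp add: fiber_sum_mult_comp[of g U p "\<lambda>w. K w v"])
  have "mutual_info U V (\<lambda>u v. p u * K (g u) v) = (\<Sum>u\<in>U. \<Sum>v\<in>V. p u * F (g u) v)"
    unfolding mutual_info_kl_term F_def k_def c_def
    by (simp add: sum_distrib_left[symmetric] mult.assoc kl_term_scale)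
  also have "\<dots> = (\<Sum>v\<in>V. \<Sum>w\<in>W. fiber_sum g U p w * F w v)"
    by (subst sum.swap) (simp add: sum_fiber_sum[OF assms, symmetric]; intro sum.cong refl fiber_sum_mult_comp)
  also have "\<dots> = mutual_info W V (\<lambda>w v. fiber_sum g U p w * K w v)"
    unfolding mutual_info_kl_term col F_def k_def
    by (subst sum.swap) (simp add: sum_distrib_left[symmetric] mult.assoc kl_term_scale)
  finally show ?thesis .
qed

lemma mutual_info_fiber_sum_le:
  fixes J :: "'u \<Rightarrow> 'v \<Rightarrow> real"
  assumes "finite U" "finite V" "finite W" "g ` U \<subseteq> W"
    and J_nonneg: "\<And>u v. u \<in> U \<Longrightarrow> v \<in> V \<Longrightarrow> 0 \<le> J u v"
  shows "mutual_info W V (\<lambda>w v. fiber_sum g U (\<lambda>u. J u v) w) \<le> mutual_info U V J"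
proof -
  define r c where "r u = (\<Sum>v\<in>V. J u v)" and "c v = (\<Sum>u\<in>U. J u v)" for u v
  have col: "(\<Sum>w\<in>W. fiber_sum g U (\<lambda>u. J u v) w) = c v" for v
    unfolding c_def by (rule sum_fiber_sum[OF assms(1,3,4)])
  have row: "(\<Sum>v\<in>V. fiber_sum g U (\<lambda>u. J u v) w) = fiber_sum g U r w" for w
    unfolding fiber_sum_def r_def by (rule sum.swap)
  have "mutual_info W V (\<lambda>w v. fiber_sum g U (\<lambda>u. J u v) w)
      = (\<Sum>w\<in>W. \<Sum>v\<in>V. kl_term (fiber_sum g U (\<lambda>u. J u v) w) (fiber_sum g U (\<lambda>u. r u * c v) w))"
    unfolding mutual_info_kl_term col row fiber_sum_mult_right ..
  also have "\<dots> \<le> (\<Sum>w\<in>W. \<Sum>v\<in>V. fiber_sum g U (\<lambda>u. kl_term (J u v) (r u * c v)) w)"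
  proof (intro sum_mono)
    fix w v assume "v \<in> V"
    have J_le: "J u v \<le> r u" "J u v \<le> c v" if "u \<in> U" for u
      unfolding r_def c_def using that \<open>v \<in> V\<close> assms(1,2) J_nonneg
      by (auto intro: member_le_sum)
    show "kl_term (fiber_sum g U (\<lambda>u. J u v) w) (fiber_sum g U (\<lambda>u. r u * c v) w)
        \<le> fiber_sum g U (\<lambda>u. kl_term (J u v) (r u * c v)) w"
      unfolding fiber_sum_def
    proof (rule log_sum_inequality)
      show "finite {u. u \<in> U \<and> g u = w}" using \<open>finite U\<close> by simp
    next
      fix u assume "u \<in> {u. u \<in> U \<and> g u = w}"
      then have "u \<in> U" by simp
      show "0 \<le> J u v" using J_nonneg \<open>u \<in> U\<close> \<open>v \<in> V\<close> .
      show "0 \<le> r u * c v" using J_le[OF \<open>u \<in> U\<close>] J_nonneg[OF \<open>u \<in> U\<close> \<open>v \<in> V\<close>] by simp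
      show "0 < J u v \<Longrightarrow> 0 < r u * c v" using J_le[OF \<open>u \<in> U\<close>] by simp
    qed
  qed
  also have "\<dots> = (\<Sum>u\<in>U. \<Sum>v\<in>V. kl_term (J u v) (r u * c v))"
    by (subst sum.swap) (simp add: sum_fiber_sum[OF assms(1,3,4)] sum.swap[of _ V])
  also have "\<dots> = mutual_info U V J"
    unfolding mutual_info_kl_term r_def c_def ..
  finally show ?thesis .
qed

section \<open>Merging the state into the inventory position\<close>

lemma finite_rng [simp]: "finite (rng m)"
  by (simp add: rng_def)

lemma image_diff_rng: "(\<lambda>(x, s). s - x) ` (rng mx \<times> rng ms) = Wset mx ms"
  unfolding Wset_def by auto

lemma finite_Wset [simp]: "finite (Wset mx ms)"
  by (simp flip: image_diff_rng)

lemma finite_Yo [simp]: "finite (Yo my ms w)"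
  unfolding Yo_def by simp

lemma diff_mem_Wset: "x \<in> rng mx \<Longrightarrow> s \<in> rng ms \<Longrightarrow> s - x \<in> Wset mx ms"
  unfolding Wset_def by blast

lemma sum_if_diff_eq_fiber_sum:
  assumes "finite A" "finite B"
  shows "(\<Sum>x\<in>A. \<Sum>s\<in>B. if s - x = w then f x s else 0)
       = fiber_sum (\<lambda>(x, s). s - x) (A \<times> B) (\<lambda>(x, s). f x s) w"
  unfolding fiber_sum_def using assms
  by (simp add: sum.inter_filter sum.cartesian_product case_prod_unfold)

lemma sum_if_diff_eq_diagonal:
  fixes f :: "int \<Rightarrow> int \<Rightarrow> real"
  assumes "\<And>x s. x \<in> A \<Longrightarrow> s \<notin> B \<Longrightarrow> f x s = 0" "finite B"
  shows "(\<Sum>x\<in>A. \<Sum>s\<in>B. if s - x = w then f x s else 0) = (\<Sum>x\<in>A. f x (x + w))"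
proof (intro sum.cong refl)
  fix x assume "x \<in> A"
  have "(\<Sum>s\<in>B. if s - x = w then f x s else 0) = (\<Sum>s\<in>B. if x + w = s then f x s else 0)"
    by (intro sum.cong refl) (auto simp: algebra_simps)
  then show "(\<Sum>s\<in>B. if s - x = w then f x s else 0) = f x (x + w)"
    using assms \<open>x \<in> A\<close> by (simp add: sum.delta)
qed

lemma sum_XS_eq_sum_fiber_sum:
  "(\<Sum>x\<in>rng mx. \<Sum>s\<in>rng ms. f x s)
     = (\<Sum>w\<in>Wset mx ms. fiber_sum (\<lambda>(x, s). s - x) (rng mx \<times> rng ms) (\<lambda>(x, s). f x s) w)"
  by (subst sum_fiber_sum) (simp_all add: image_diff_rng sum.cartesian_product)

lemma xi_eq_fiber_sum: "xi mx ms \<pi> w = fiber_sum (\<lambda>(x, s). s - x) (rng mx \<times> rng ms) (\<lambda>(x, s). \<pi> x s) w"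
  unfolding xi_def by (simp add: sum_if_diff_eq_fiber_sum)

lemma actA_comp_diff: "actB mx my ms b \<Longrightarrow> actA mx my ms (\<lambda>y x s. b y (s - x))"
  unfolding actA_def actB_def using diff_mem_Wset by blast

lemma MI_A_comp_diff_eq_MI_B: "MI_A mx my ms (\<lambda>y x s. b y (s - x)) \<pi> = MI_B mx my ms b (xi mx ms \<pi>)"
proof -
  have "MI_A mx my ms (\<lambda>y x s. b y (s - x)) \<pi>
      = mutual_info (rng mx \<times> rng ms) (rng my)
          (\<lambda>u y. (\<lambda>(x, s). \<pi> x s) u * (\<lambda>w y. b y w) ((\<lambda>(x, s). s - x) u) y)"
    unfolding MI_A_def by (simp add: case_prod_unfold)
  also have "\<dots> = MI_B mx my ms b (xi mx ms \<pi>)"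
    unfolding MI_B_def xi_eq_fiber_sum
    by (rule mutual_info_fiber_sum_eq) (simp_all add: image_diff_rng)
  finally show ?thesis .
qed

text \<open>Beliefs are only kept nonnegative and supported: the filter yields the zero function
  after an observation of probability zero.\<close>
definition nonneg_supported :: "nat \<Rightarrow> nat \<Rightarrow> (int \<Rightarrow> int \<Rightarrow> real) \<Rightarrow> bool" where
  "nonneg_supported mx ms \<pi> \<longleftrightarrow>
     (\<forall>x s. 0 \<le> \<pi> x s) \<and> (\<forall>x s. x \<notin> rng mx \<or> s \<notin> rng ms \<longrightarrow> \<pi> x s = 0)"

lemma is_pmf_XS_imp_nonneg_supported: "is_pmf_XS mx ms \<pi> \<Longrightarrow> nonneg_supported mx ms \<pi>"
  unfolding is_pmf_XS_def is_pmf_on_def nonneg_supported_def by auto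

lemma actA_pmf: "actA mx my ms a \<Longrightarrow> x \<in> rng mx \<Longrightarrow> s \<in> rng ms \<Longrightarrow> is_pmf_on (Yo my ms (s - x)) (\<lambda>y. a y x s)"
  unfolding actA_def by blast

lemma actA_mult_nonneg:
  assumes "actA mx my ms a" "nonneg_supported mx ms \<pi>"
  shows "0 \<le> a y x s * \<pi> x s"
  using assms actA_pmf[OF assms(1)] unfolding nonneg_supported_def is_pmf_on_def
  by (cases "x \<in> rng mx \<and> s \<in> rng ms") auto

context
  fixes mx my ms :: nat and a :: "int \<Rightarrow> int \<Rightarrow> int \<Rightarrow> real"
    and \<pi> :: "int \<Rightarrow> int \<Rightarrow> real" and b :: "int \<Rightarrow> int \<Rightarrow> real"
  assumes \<pi>: "nonneg_supported mx ms \<pi>"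
    and b_fiber: "\<forall>w\<in>Wset mx ms. xi mx ms \<pi> w \<noteq> 0 \<longrightarrow>
           (\<forall>y. b y w = (\<Sum>x\<in>rng mx. \<Sum>s\<in>rng ms. if s - x = w then a y x s * \<pi> x s else 0)
                        / xi mx ms \<pi> w)"
begin

lemma fiber_joint_eq:
  "fiber_sum (\<lambda>(x, s). s - x) (rng mx \<times> rng ms) (\<lambda>(x, s). a y x s * \<pi> x s) w = xi mx ms \<pi> w * b y w"
proof (cases "xi mx ms \<pi> w = 0")
  case True
  then have "\<forall>(x, s) \<in> {u. u \<in> rng mx \<times> rng ms \<and> (\<lambda>(x, s). s - x) u = w}. \<pi> x s = 0"
    using \<pi> unfolding xi_eq_fiber_sum fiber_sum_def nonneg_supported_def
    by (subst (asm) sum_nonneg_eq_0_iff) (auto simp: case_prod_unfold)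
  then have "fiber_sum (\<lambda>(x, s). s - x) (rng mx \<times> rng ms) (\<lambda>(x, s). a y x s * \<pi> x s) w = 0"
    unfolding fiber_sum_def by (intro sum.neutral) auto
  then show ?thesis using True by simp
next
  case False
  then have "{u. u \<in> rng mx \<times> rng ms \<and> (\<lambda>(x, s). s - x) u = w} \<noteq> {}"
    unfolding xi_eq_fiber_sum fiber_sum_def by force
  then have "w \<in> Wset mx ms"
    by (auto simp flip: image_diff_rng)
  then have "b y w = fiber_sum (\<lambda>(x, s). s - x) (rng mx \<times> rng ms) (\<lambda>(x, s). a y x s * \<pi> x s) w
                     / xi mx ms \<pi> w"
    using b_fiber False sum_if_diff_eq_fiber_sum[OF finite_rng finite_rng, where f = "\<lambda>x s. a y x s * \<pi> x s"]
    by simp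
  then show ?thesis using False by simp
qed

lemma output_prob_eq:
  "(\<Sum>x\<in>rng mx. \<Sum>s\<in>rng ms. b y (s - x) * \<pi> x s) = (\<Sum>x\<in>rng mx. \<Sum>s\<in>rng ms. a y x s * \<pi> x s)"
proof -
  have "(\<Sum>x\<in>rng mx. \<Sum>s\<in>rng ms. b y (s - x) * \<pi> x s)
      = (\<Sum>w\<in>Wset mx ms. fiber_sum (\<lambda>(x, s). s - x) (rng mx \<times> rng ms) (\<lambda>(x, s). b y (s - x) * \<pi> x s) w)"
    by (rule sum_XS_eq_sum_fiber_sum)
  also have "\<dots> = (\<Sum>w\<in>Wset mx ms. xi mx ms \<pi> w * b y w)"
    using fiber_sum_mult_comp[of "\<lambda>(x, s). s - x" _ "\<lambda>(x, s). \<pi> x s" "b y"]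
    unfolding xi_eq_fiber_sum by (simp add: case_prod_unfold mult.commute)
  also have "\<dots> = (\<Sum>x\<in>rng mx. \<Sum>s\<in>rng ms. a y x s * \<pi> x s)"
    unfolding fiber_joint_eq[symmetric] by (rule sum_XS_eq_sum_fiber_sum[symmetric])
  finally show ?thesis .
qed

lemma filt_eq:
  "filt mx ms (\<lambda>x' x. q x') \<pi> y a = filt mx ms (\<lambda>x' x. q x') \<pi> y (\<lambda>y x s. b y (s - x))"
proof (intro ext)
  fix x' s'
  define w where "w = s' - y"
  have shift: "s' + x - y = x + w" for x unfolding w_def by simp
  have \<pi>_out: "x \<in> rng mx \<Longrightarrow> s \<notin> rng ms \<Longrightarrow> \<pi> x s = 0" for x s
    using \<pi> unfolding nonneg_supported_def by blast
  have num_a: "(\<Sum>x\<in>rng mx. q x' * a y x (s' + x - y) * \<pi> x (s' + x - y)) = q x' * (xi mx ms \<pi> w * b y w)"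
    unfolding shift fiber_joint_eq[symmetric] sum_if_diff_eq_fiber_sum[symmetric, OF finite_rng finite_rng]
    by (subst sum_if_diff_eq_diagonal) (simp_all add: \<pi>_out sum_distrib_left mult.assoc)
  have num_b: "(\<Sum>x\<in>rng mx. q x' * b y (s' + x - y - x) * \<pi> x (s' + x - y)) = q x' * (xi mx ms \<pi> w * b y w)"
    unfolding shift xi_def
    by (subst sum_if_diff_eq_diagonal) (simp_all add: \<pi>_out sum_distrib_left mult_ac)
  show "filt mx ms (\<lambda>x' x. q x') \<pi> y a x' s'
      = filt mx ms (\<lambda>x' x. q x') \<pi> y (\<lambda>y x s. b y (s - x)) x' s'"
    unfolding filt_def num_a num_b output_prob_eq ..
qed

lemma MI_B_le_MI_A:
  assumes "actA mx my ms a"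
  shows "MI_B mx my ms b (xi mx ms \<pi>) \<le> MI_A mx my ms a \<pi>"
proof -
  have "MI_B mx my ms b (xi mx ms \<pi>)
      = mutual_info (Wset mx ms) (rng my)
          (\<lambda>w y. fiber_sum (\<lambda>(x, s). s - x) (rng mx \<times> rng ms) (\<lambda>u. (\<lambda>(x, s) y. \<pi> x s * a y x s) u y) w)"
    unfolding MI_B_def fiber_joint_eq[symmetric] by (simp add: case_prod_unfold mult.commute)
  also have "\<dots> \<le> MI_A mx my ms a \<pi>"
    unfolding MI_A_def
    using actA_mult_nonneg[OF assms \<pi>] by (intro mutual_info_fiber_sum_le) (auto simp: image_diff_rng mult.commute)
  finally show ?thesis .
qed

lemma actB_of_fiber:
  assumes a: "actA mx my ms a"
    and b_null: "\<forall>w\<in>Wset mx ms. xi mx ms \<pi> w = 0 \<longrightarrow> is_pmf_on (Yo my ms w) (\<lambda>y. b y w)"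
  shows "actB mx my ms b"
  unfolding actB_def
proof
  fix w assume w: "w \<in> Wset mx ms"
  show "is_pmf_on (Yo my ms w) (\<lambda>y. b y w)"
  proof (cases "xi mx ms \<pi> w = 0")
    case True
    then show ?thesis using b_null w by blast
  next
    case False
    let ?N = "\<lambda>y. fiber_sum (\<lambda>(x, s). s - x) (rng mx \<times> rng ms) (\<lambda>(x, s). a y x s * \<pi> x s) w"
    have "xi mx ms \<pi> w > 0"
      using False \<pi> unfolding xi_def nonneg_supported_def by (simp add: sum_nonneg order_le_neq_trans)
    have N_nonneg: "0 \<le> ?N y" for y
      unfolding fiber_sum_def using actA_mult_nonneg[OF a \<pi>] by (auto intro: sum_nonneg)
    have N_out: "?N y = 0" if "y \<notin> Yo my ms w" for y
      unfolding fiber_sum_def using actA_pmf[OF a] that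
      by (intro sum.neutral) (auto simp: is_pmf_on_def)
    \<comment> \<open>on the fiber of \<open>w\<close> every \<open>a(\<cdot>|x,s)\<close> is a pmf on the same set \<open>Yo w\<close>\<close>
    have "(\<Sum>y\<in>Yo my ms w. ?N y)
        = fiber_sum (\<lambda>(x, s). s - x) (rng mx \<times> rng ms) (\<lambda>(x, s). (\<Sum>y\<in>Yo my ms w. a y x s) * \<pi> x s) w"
      unfolding fiber_sum_def by (subst sum.swap) (simp add: case_prod_unfold sum_distrib_right)
    also have "\<dots> = xi mx ms \<pi> w"
      unfolding xi_eq_fiber_sum fiber_sum_def using actA_pmf[OF a]
      by (intro sum.cong refl) (auto simp: is_pmf_on_def)
    finally have "xi mx ms \<pi> w * (\<Sum>y\<in>Yo my ms w. b y w) = xi mx ms \<pi> w"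
      by (simp add: fiber_joint_eq sum_distrib_left)
    then show ?thesis
      unfolding is_pmf_on_def using \<open>xi mx ms \<pi> w > 0\<close> N_nonneg N_out
      by (simp add: fiber_joint_eq zero_le_mult_iff)
  qed
qed

end

section \<open>The sequential problem\<close>

lemma nonneg_supported_filt:
  assumes Q: "\<And>x' x. 0 \<le> Q x' x" "\<And>x' x. x' \<notin> rng mx \<Longrightarrow> Q x' x = 0"
    and a: "actA mx my ms a" and \<pi>: "nonneg_supported mx ms \<pi>"
  shows "nonneg_supported mx ms (filt mx ms Q \<pi> y a)"
proof -
  have num_null: "(\<Sum>x\<in>rng mx. Q x' x * a y x (s' + x - y) * \<pi> x (s' + x - y)) = 0"
    if "x' \<notin> rng mx \<or> s' \<notin> rng ms" for x' s'
  proof (intro sum.neutral ballI)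
    fix x assume x: "x \<in> rng mx"
    \<comment> \<open>\<open>y \<in> Yo (s - x)\<close> for \<open>s = s' + x - y\<close> forces \<open>s' \<in> rng ms\<close>\<close>
    have "a y x (s' + x - y) * \<pi> x (s' + x - y) = 0" if "s' \<notin> rng ms"
      using actA_pmf[OF a x] \<pi> that unfolding is_pmf_on_def nonneg_supported_def Yo_def
      by (cases "s' + x - y \<in> rng ms") auto
    then show "Q x' x * a y x (s' + x - y) * \<pi> x (s' + x - y) = 0"
      using Q(2) that by auto
  qed
  have "0 \<le> Q x' x * a y x s * \<pi> x s" for x' x s
    using Q(1) actA_mult_nonneg[OF a \<pi>] by (simp add: mult.assoc)
  then show ?thesis
    unfolding nonneg_supported_def filt_def using num_null
    by (auto intro!: divide_nonneg_nonneg sum_nonneg simp: actA_mult_nonneg[OF a \<pi>])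
qed

lemma seq_cost_le:
  assumes MI_le: "\<And>h. MI_A mx my ms (\<sigma>' h) (bel h) \<le> MI_A mx my ms (\<sigma> h) (bel h)"
    and out_eq: "\<And>h y. (\<Sum>x\<in>rng mx. \<Sum>s\<in>rng ms. \<sigma>' h y x s * bel h x s)
                     = (\<Sum>x\<in>rng mx. \<Sum>s\<in>rng ms. \<sigma> h y x s * bel h x s)"
    and out_nonneg: "\<And>h y. 0 \<le> (\<Sum>x\<in>rng mx. \<Sum>s\<in>rng ms. \<sigma> h y x s * bel h x s)"
    and filt'_bel: "\<And>h y. y \<in> rng my \<Longrightarrow> filt mx ms Q (bel h) y (\<sigma>' h) = bel (h @ [y])"
    and filt_bel: "\<And>h y. y \<in> rng my \<Longrightarrow> filt mx ms Q (bel h) y (\<sigma> h) = bel (h @ [y])"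
  shows "seq_cost mx my ms Q \<sigma>' n h (bel h) \<le> seq_cost mx my ms Q \<sigma> n h (bel h)"
proof (induction n arbitrary: h)
  case 0
  then show ?case by simp
next
  case (Suc n)
  have "(\<Sum>x\<in>rng mx. \<Sum>s\<in>rng ms. \<sigma>' h y x s * bel h x s) *
          seq_cost mx my ms Q \<sigma>' n (h @ [y]) (filt mx ms Q (bel h) y (\<sigma>' h))
     \<le> (\<Sum>x\<in>rng mx. \<Sum>s\<in>rng ms. \<sigma> h y x s * bel h x s) *
          seq_cost mx my ms Q \<sigma> n (h @ [y]) (filt mx ms Q (bel h) y (\<sigma> h))"
    if "y \<in> rng my" for y
    unfolding out_eq filt'_bel[OF that] filt_bel[OF that] by (intro mult_left_mono Suc.IH out_nonneg)
  then show ?case using MI_le[of h] by (simp add: add_mono sum_mono)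
qed

text \<open>Where \<open>\<xi>(w) = 0\<close> the merged channel is arbitrary; ordering \<open>max 0 (-w) \<le> mx \<le> my\<close> is
  always feasible.\<close>
definition min_order_channel :: "int \<Rightarrow> int \<Rightarrow> real" where
  "min_order_channel y w = (if y = max 0 (- w) then 1 else 0)"

lemma min_order_channel_pmf:
  assumes "mx \<le> my" "w \<in> Wset mx ms"
  shows "is_pmf_on (Yo my ms w) (\<lambda>y. min_order_channel y w)"
proof -
  have "max 0 (- w) \<in> Yo my ms w"
    using assms unfolding Wset_def Yo_def rng_def by auto
  then show ?thesis
    unfolding is_pmf_on_def min_order_channel_def by (auto simp: sum.delta)
qed

definition merged_channel ::
    "nat \<Rightarrow> nat \<Rightarrow> (int \<Rightarrow> int \<Rightarrow> int \<Rightarrow> real) \<Rightarrow> (int \<Rightarrow> int \<Rightarrow> real) \<Rightarrow> int \<Rightarrow> int \<Rightarrow> real" where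
  "merged_channel mx ms a \<pi> y w =
     (if xi mx ms \<pi> w = 0 then min_order_channel y w
      else (\<Sum>x\<in>rng mx. \<Sum>s\<in>rng ms. if s - x = w then a y x s * \<pi> x s else 0) / xi mx ms \<pi> w)"

text \<open>Histories grow at the end, so the recursion runs over the reversed history.\<close>
fun belief_rev :: "nat \<Rightarrow> nat \<Rightarrow> (int \<Rightarrow> int \<Rightarrow> real) \<Rightarrow> (int list \<Rightarrow> (int \<Rightarrow> int \<Rightarrow> int \<Rightarrow> real))
    \<Rightarrow> (int \<Rightarrow> int \<Rightarrow> real) \<Rightarrow> int list \<Rightarrow> (int \<Rightarrow> int \<Rightarrow> real)" where
  "belief_rev mx ms Q \<sigma> \<pi>0 [] = \<pi>0"
| "belief_rev mx ms Q \<sigma> \<pi>0 (y # r) = filt mx ms Q (belief_rev mx ms Q \<sigma> \<pi>0 r) y (\<sigma> (rev r))"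

definition belief :: "nat \<Rightarrow> nat \<Rightarrow> (int \<Rightarrow> int \<Rightarrow> real) \<Rightarrow> (int list \<Rightarrow> (int \<Rightarrow> int \<Rightarrow> int \<Rightarrow> real))
    \<Rightarrow> (int \<Rightarrow> int \<Rightarrow> real) \<Rightarrow> int list \<Rightarrow> (int \<Rightarrow> int \<Rightarrow> real)" where
  "belief mx ms Q \<sigma> \<pi>0 h = belief_rev mx ms Q \<sigma> \<pi>0 (rev h)"

lemma belief_Nil [simp]: "belief mx ms Q \<sigma> \<pi>0 [] = \<pi>0"
  by (simp add: belief_def)

lemma belief_snoc [simp]:
  "belief mx ms Q \<sigma> \<pi>0 (h @ [y]) = filt mx ms Q (belief mx ms Q \<sigma> \<pi>0 h) y (\<sigma> h)"
  by (simp add: belief_def)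

lemma nonneg_supported_belief:
  assumes Q: "\<And>x' x. 0 \<le> Q x' x" "\<And>x' x. x' \<notin> rng mx \<Longrightarrow> Q x' x = 0"
    and \<sigma>: "\<And>h. actA mx my ms (\<sigma> h)" and "nonneg_supported mx ms \<pi>0"
  shows "nonneg_supported mx ms (belief mx ms Q \<sigma> \<pi>0 h)"
  by (induction h rule: rev_induct) (simp_all add: assms nonneg_supported_filt[OF Q \<sigma>])

lemma merged_policy_no_worse:
  assumes "mx \<le> my" and PX: "is_pmf_on (rng mx) PX" and "is_pmf_XS mx ms \<pi>0"
    and \<sigma>: "\<forall>h. actA mx my ms (\<sigma> h)"
  shows "\<exists>\<sigma>'. (\<forall>h. \<exists>b'. actB mx my ms b' \<and> \<sigma>' h = (\<lambda>y x s. b' y (s - x)))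
             \<and> (\<forall>h. actA mx my ms (\<sigma>' h))
             \<and> avg_cost mx my ms (\<lambda>x' x. PX x') \<sigma>' T \<pi>0 \<le> avg_cost mx my ms (\<lambda>x' x. PX x') \<sigma> T \<pi>0"
proof -
  define bel where "bel = belief mx ms (\<lambda>x' x. PX x') \<sigma> \<pi>0"
  define b where "b h = merged_channel mx ms (\<sigma> h) (bel h)" for h
  define \<sigma>' where "\<sigma>' h = (\<lambda>y x s. b h y (s - x))" for h
  have bel: "nonneg_supported mx ms (bel h)" for h
    unfolding bel_def using PX \<sigma> is_pmf_XS_imp_nonneg_supported[OF \<open>is_pmf_XS mx ms \<pi>0\<close>]
    by (intro nonneg_supported_belief) (auto simp: is_pmf_on_def)
  have b_fiber: "\<forall>w\<in>Wset mx ms. xi mx ms (bel h) w \<noteq> 0 \<longrightarrow>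
      (\<forall>y. b h y w = (\<Sum>x\<in>rng mx. \<Sum>s\<in>rng ms. if s - x = w then \<sigma> h y x s * bel h x s else 0)
                     / xi mx ms (bel h) w)" for h
    unfolding b_def merged_channel_def by simp
  have b_null: "\<forall>w\<in>Wset mx ms. xi mx ms (bel h) w = 0 \<longrightarrow> is_pmf_on (Yo my ms w) (\<lambda>y. b h y w)" for h
    unfolding b_def merged_channel_def using min_order_channel_pmf[OF \<open>mx \<le> my\<close>] by simp
  have b: "actB mx my ms (b h)" for h
    using actB_of_fiber[OF bel b_fiber \<sigma>[rule_format] b_null] .
  have "seq_cost mx my ms (\<lambda>x' x. PX x') \<sigma>' T [] (bel []) \<le> seq_cost mx my ms (\<lambda>x' x. PX x') \<sigma> T [] (bel [])"
  proof (rule seq_cost_le)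
    show "MI_A mx my ms (\<sigma>' h) (bel h) \<le> MI_A mx my ms (\<sigma> h) (bel h)" for h
      unfolding \<sigma>'_def MI_A_comp_diff_eq_MI_B using MI_B_le_MI_A[OF bel b_fiber \<sigma>[rule_format]] .
    show "(\<Sum>x\<in>rng mx. \<Sum>s\<in>rng ms. \<sigma>' h y x s * bel h x s) = (\<Sum>x\<in>rng mx. \<Sum>s\<in>rng ms. \<sigma> h y x s * bel h x s)" for h y
      unfolding \<sigma>'_def using output_prob_eq[OF bel b_fiber] .
    show "0 \<le> (\<Sum>x\<in>rng mx. \<Sum>s\<in>rng ms. \<sigma> h y x s * bel h x s)" for h y
      using actA_mult_nonneg[OF \<sigma>[rule_format] bel] by (intro sum_nonneg)
    show "filt mx ms (\<lambda>x' x. PX x') (bel h) y (\<sigma> h) = bel (h @ [y])" for h y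
      unfolding bel_def by simp
    then show "filt mx ms (\<lambda>x' x. PX x') (bel h) y (\<sigma>' h) = bel (h @ [y])" for h y
      unfolding \<sigma>'_def using filt_eq[OF bel b_fiber] by metis
  qed
  then have "avg_cost mx my ms (\<lambda>x' x. PX x') \<sigma>' T \<pi>0 \<le> avg_cost mx my ms (\<lambda>x' x. PX x') \<sigma> T \<pi>0"
    unfolding avg_cost_def bel_def by (simp add: divide_right_mono)
  moreover have "\<forall>h. \<exists>b'. actB mx my ms b' \<and> \<sigma>' h = (\<lambda>y x s. b' y (s - x))"
    unfolding \<sigma>'_def using b by blast
  moreover have "\<forall>h. actA mx my ms (\<sigma>' h)"
    unfolding \<sigma>'_def using actA_comp_diff[OF b] by blast
  ultimately show ?thesis by (intro exI[of _ \<sigma>'] conjI)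
qed

theorem lemma4:
  fixes mx my ms :: nat
    and PX :: "int \<Rightarrow> real"
    and a :: "int \<Rightarrow> int \<Rightarrow> int \<Rightarrow> real"
    and \<pi> :: "int \<Rightarrow> int \<Rightarrow> real"
    and b :: "int \<Rightarrow> int \<Rightarrow> real"
  assumes "mx \<le> my"
    and "is_pmf_on (rng mx) PX"
    and "actA mx my ms a"
    and "is_pmf_XS mx ms \<pi>"
    and "\<forall>w\<in>Wset mx ms. xi mx ms \<pi> w \<noteq> 0 \<longrightarrow>
           (\<forall>y. b y w = (\<Sum>x\<in>rng mx. \<Sum>s\<in>rng ms. if s - x = w then a y x s * \<pi> x s else 0)
                        / xi mx ms \<pi> w)"
    and "\<forall>w\<in>Wset mx ms. xi mx ms \<pi> w = 0 \<longrightarrow> is_pmf_on (Yo my ms w) (\<lambda>y. b y w)"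
  shows "actB mx my ms b
    \<and> actA mx my ms (\<lambda>y x s. b y (s - x))
    \<and> (\<forall>y\<in>rng my. filt mx ms (\<lambda>x' x. PX x') \<pi> y a
                  = filt mx ms (\<lambda>x' x. PX x') \<pi> y (\<lambda>y x s. b y (s - x)))
    \<and> MI_A mx my ms a \<pi> \<ge> MI_A mx my ms (\<lambda>y x s. b y (s - x)) \<pi>
    \<and> MI_A mx my ms (\<lambda>y x s. b y (s - x)) \<pi> = MI_B mx my ms b (xi mx ms \<pi>)
    \<and> (\<forall>T \<pi>0 \<sigma>. T > 0 \<longrightarrow> is_pmf_XS mx ms \<pi>0 \<longrightarrow> (\<forall>h. actA mx my ms (\<sigma> h)) \<longrightarrow>
         (\<exists>\<sigma>'. (\<forall>h. \<exists>b'. actB mx my ms b' \<and> \<sigma>' h = (\<lambda>y x s. b' y (s - x)))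
               \<and> (\<forall>h. actA mx my ms (\<sigma>' h))
               \<and> avg_cost mx my ms (\<lambda>x' x. PX x') \<sigma>' T \<pi>0
                   \<le> avg_cost mx my ms (\<lambda>x' x. PX x') \<sigma> T \<pi>0))"
proof -
  have \<pi>: "nonneg_supported mx ms \<pi>"
    using assms(4) by (rule is_pmf_XS_imp_nonneg_supported)
  have b: "actB mx my ms b"
    using actB_of_fiber[OF \<pi> assms(5) assms(3) assms(6)] .
  show ?thesis
    using b actA_comp_diff[OF b] filt_eq[OF \<pi> assms(5)] MI_B_le_MI_A[OF \<pi> assms(5) assms(3)]
      MI_A_comp_diff_eq_MI_B merged_policy_no_worse[OF assms(1,2)]
    by simp
qed

end
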